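(* Let $m\ge 2$. Let $H_1$ be the graph with vertices $v_1,\dots,v_5$ and edges $v_1v_2,v_2v_3,v_3v_4,v_4v_5,v_5v_1,v_2v_4,v_3v_5$ (it has exactly one vertex of degree $2$, namely $v_1$), and let $H_2$ be the graph with vertices $v_1,\dots,v_6$ and edges $v_1v_2,v_2v_3,v_3v_4,v_4v_5,v_5v_6,v_6v_1,v_2v_5,v_3v_6$ (it has exactly two vertices of degree $2$, namely $v_1,v_4$). Let $G$ be the cubic graph constructed from the path $P_m$ by replacing each leaf with a copy of $H_1$ and each internal vertex with a copy of $H_2$, where each edge $uv$ of $P_m$ is replaced by an edge joining a degree-$2$ vertex of the copy for $u$ to a degree-$2$ vertex of the copy for $v$, each degree-$2$ vertex being used exactly once. Then (a) $G$ is a bridged, Class $2$ cubic graph with triangles, and (b) $c_2(G)-\left\lceil\frac{|V(G)|+2}{4}\right\rceil=\left\lfloor\frac{m}{2}\right\rfloor$.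
   Context: A graph is bridged if it has a bridge (an edge whose removal increases the number of components). A graph of maximum degree $\Delta$ is Class $1$ if its chromatic index is $\Delta$ and Class $2$ if it is $\Delta+1$. For a graph $G=(V,E)$ and $S_0\subseteq V$, the irreversible $2$-threshold conversion process sets, for $t=1,2,\dots$, $S_t=S_{t-1}\cup\{v: v \text{ has at least } 2 \text{ neighbours in } S_{t-1}\}$; $S_0$ is a $2$-conversion set if $S_t=V$ for some $t$, and $c_2(G)$ is the minimum size of a $2$-conversion set. *)

theory Defs
  imports Complex_Main
begin

text \<open>Simple graphs are given by a vertex set V and a set E of 2-element edges (subsets of V).\<close>

definition degree :: "'a set set \<Rightarrow> 'a \<Rightarrow> nat" where
  "degree E v = card {u. {u, v} \<in> E}"

definition max_degree :: "'a set \<Rightarrow> 'a set set \<Rightarrow> nat" where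
  "max_degree V E = Max (degree E ` V)"

definition cubic :: "'a set \<Rightarrow> 'a set set \<Rightarrow> bool" where
  "cubic V E \<longleftrightarrow> (\<forall>v\<in>V. degree E v = 3)"

definition reach :: "'a set set \<Rightarrow> 'a \<Rightarrow> 'a \<Rightarrow> bool" where
  "reach E = (\<lambda>u v. {u, v} \<in> E)\<^sup>*\<^sup>*"

definition num_components :: "'a set \<Rightarrow> 'a set set \<Rightarrow> nat" where
  "num_components V E = card ((\<lambda>u. {v \<in> V. reach E u v}) ` V)"

definition is_bridge :: "'a set \<Rightarrow> 'a set set \<Rightarrow> 'a set \<Rightarrow> bool" where
  "is_bridge V E e \<longleftrightarrow> e \<in> E \<and> num_components V (E - {e}) > num_components V E"

definition bridged :: "'a set \<Rightarrow> 'a set set \<Rightarrow> bool" where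
  "bridged V E \<longleftrightarrow> (\<exists>e. is_bridge V E e)"

definition proper_edge_colouring :: "'a set set \<Rightarrow> nat \<Rightarrow> ('a set \<Rightarrow> nat) \<Rightarrow> bool" where
  "proper_edge_colouring E k c \<longleftrightarrow>
     (\<forall>e\<in>E. c e < k) \<and> (\<forall>e\<in>E. \<forall>f\<in>E. e \<noteq> f \<and> e \<inter> f \<noteq> {} \<longrightarrow> c e \<noteq> c f)"

definition chromatic_index :: "'a set set \<Rightarrow> nat" where
  "chromatic_index E = (LEAST k. \<exists>c. proper_edge_colouring E k c)"

definition class2 :: "'a set \<Rightarrow> 'a set set \<Rightarrow> bool" where
  "class2 V E \<longleftrightarrow> chromatic_index E = max_degree V E + 1"

definition has_triangle :: "'a set set \<Rightarrow> bool" where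
  "has_triangle E \<longleftrightarrow> (\<exists>a b c. a \<noteq> b \<and> b \<noteq> c \<and> a \<noteq> c \<and>
       {a, b} \<in> E \<and> {b, c} \<in> E \<and> {a, c} \<in> E)"

definition conv_step :: "'a set \<Rightarrow> 'a set set \<Rightarrow> 'a set \<Rightarrow> 'a set" where
  "conv_step V E S = S \<union> {v \<in> V. 2 \<le> card {u \<in> S. {u, v} \<in> E}}"

definition is_2conversion_set :: "'a set \<Rightarrow> 'a set set \<Rightarrow> 'a set \<Rightarrow> bool" where
  "is_2conversion_set V E S \<longleftrightarrow> S \<subseteq> V \<and> (\<exists>t. (conv_step V E ^^ t) S = V)"

definition c2 :: "'a set \<Rightarrow> 'a set set \<Rightarrow> nat" where
  "c2 V E = (LEAST k. \<exists>S. is_2conversion_set V E S \<and> card S = k)"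

text \<open>Vertex (i,j) is v_j in the copy for path vertex i. Path edge i(i+1) joins the "right port" of copy i (v1 for i = 1,
  v4 for internal i) to the "left port" v1 of copy i+1.\<close>

definition H1_edges :: "(nat \<times> nat) list" where
  "H1_edges = [(1,2),(2,3),(3,4),(4,5),(5,1),(2,4),(3,5)]"

definition H2_edges :: "(nat \<times> nat) list" where
  "H2_edges = [(1,2),(2,3),(3,4),(4,5),(5,6),(6,1),(2,5),(3,6)]"

definition G_V :: "nat \<Rightarrow> (nat \<times> nat) set" where
  "G_V m = {(i, j). 1 \<le> i \<and> i \<le> m \<and> 1 \<le> j \<and> j \<le> (if i = 1 \<or> i = m then 5 else 6)}"

definition right_port :: "nat \<Rightarrow> nat \<times> nat" where
  "right_port i = (if i = 1 then (1, 1) else (i, 4))"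

definition G_E :: "nat \<Rightarrow> (nat \<times> nat) set set" where
  "G_E m =
     {{(i, a), (i, b)} | i a b. 1 \<le> i \<and> i \<le> m \<and>
         (a, b) \<in> set (if i = 1 \<or> i = m then H1_edges else H2_edges)}
   \<union> {{right_port i, (i + 1, 1)} | i. 1 \<le> i \<and> i < m}"

end

theory Submission
  imports Defs
begin

(* Without the edge joining the first two copies, no edge leaves the first copy of H1, so
   that edge is a bridge; the copy contains the triangle v2 v3 v4.  In a 3-edge-colouring
   every colour would appear at each of the five cubic vertices of this copy, so a colour
   not used on the bridge would be a perfect matching of five vertices; hence G is Class 2,
   and an explicit 4-edge-colouring exists.

   Since |V(G)| = 6m - 2, part (b) says c2(G) = 2m.  In a cubic graph a vertex set in which
   every vertex has two neighbours inside the set is never converted from outside it.  For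
   every vertex x of a copy there is a triangle or a 4-cycle in that copy avoiding x, so a
   2-conversion set contains two vertices of every copy.  Conversely, v2 and the last vertex
   of every copy convert all remaining vertices within two steps. *)

section \<open>Neighbourhoods, connectivity and edge colourings\<close>

definition neighbours :: "'a set set \<Rightarrow> 'a \<Rightarrow> 'a set" where
  "neighbours E v = {u. {u, v} \<in> E}"

lemma edge_iff_mem_neighbours: "{u, v} \<in> E \<longleftrightarrow> u \<in> neighbours E v"
  by (simp add: neighbours_def)

lemma degree_eq_card_neighbours: "degree E v = card (neighbours E v)"
  by (simp add: degree_def neighbours_def)

lemma max_degree_cubic:
  assumes "cubic V E" and "V \<noteq> {}"
  shows "max_degree V E = 3"
proof -
  have "degree E ` V = {3}"
    using assms by (auto simp: cubic_def)
  then show ?thesis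
    by (simp add: max_degree_def)
qed

lemma reach_edge: "{u, v} \<in> E \<Longrightarrow> reach E u v"
  unfolding reach_def by (rule r_into_rtranclp)

lemma reach_trans: "reach E u v \<Longrightarrow> reach E v w \<Longrightarrow> reach E u w"
  unfolding reach_def by (rule rtranclp_trans)

lemma reach_sym: "reach E u v \<Longrightarrow> reach E v u"
  unfolding reach_def by (rule sympD[OF symp_rtranclp]) (auto intro: sympI simp: insert_commute)

lemma reach_closed:
  assumes "reach E a b" and "a \<in> A" and "\<And>x y. {x, y} \<in> E \<Longrightarrow> x \<in> A \<Longrightarrow> y \<in> A"
  shows "b \<in> A"
  using assms(1,2) unfolding reach_def by (induction rule: rtranclp_induct) (use assms(3) in blast)+

lemma num_components_eq_1:
  assumes "r \<in> V" and "\<And>v. v \<in> V \<Longrightarrow> reach E v r"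
  shows "num_components V E = 1"
proof -
  have "{v \<in> V. reach E u v} = V" if "u \<in> V" for u
    using assms(2) that by (blast intro: reach_trans reach_sym)
  then have "(\<lambda>u. {v \<in> V. reach E u v}) ` V = {V}"
    using assms(1) by auto
  then show ?thesis
    by (simp add: num_components_def)
qed

lemma num_components_ge_2:
  assumes "finite V" and "a \<in> V" and "b \<in> V" and "\<not> reach E a b"
  shows "2 \<le> num_components V E"
proof -
  let ?C = "\<lambda>u. {v \<in> V. reach E u v}"
  have "?C a \<noteq> ?C b"
    using assms(3,4) by (auto simp: reach_def)
  then have "2 = card {?C a, ?C b}"
    by simp
  also have "\<dots> \<le> card (?C ` V)"
    using assms(1-3) by (intro card_mono) auto
  finally show ?thesis
    by (simp add: num_components_def)
qed

lemma is_bridgeI: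
  assumes "e \<in> E" and "num_components V E = 1" and "finite V"
    and "a \<in> V" and "b \<in> V" and "\<not> reach (E - {e}) a b"
  shows "is_bridge V E e"
  using num_components_ge_2[OF assms(3-6)] assms(1,2) by (simp add: is_bridge_def)

lemma inj_on_three: "distinct [f a, f b, f c] \<Longrightarrow> inj_on f {a, b, c}"
  using distinct_map[of f "[a, b, c]"] by simp

lemma proper_edge_colouringI:
  assumes "\<And>e. e \<in> E \<Longrightarrow> c e < k"
    and "\<And>e. e \<in> E \<Longrightarrow> \<exists>u v. e = {u, v} \<and> u \<in> V \<and> v \<in> V"
    and "\<And>v. v \<in> V \<Longrightarrow> inj_on (\<lambda>u. c {u, v}) (neighbours E v)"
  shows "proper_edge_colouring E k c"
  unfolding proper_edge_colouring_def
proof (intro conjI ballI impI)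
  fix e f assume e: "e \<in> E" and f: "f \<in> E" and "e \<noteq> f \<and> e \<inter> f \<noteq> {}"
  then obtain v where "v \<in> e" "v \<in> f" "e \<noteq> f" by blast
  with assms(2)[OF e] assms(2)[OF f] obtain u w where
    uvw: "e = {u, v}" "f = {w, v}" "u \<noteq> w" "v \<in> V"
    by (auto simp: doubleton_eq_iff insert_commute)
  then have "u \<in> neighbours E v" "w \<in> neighbours E v"
    using e f by (auto simp: neighbours_def)
  then show "c e \<noteq> c f"
    using assms(3)[OF \<open>v \<in> V\<close>] uvw by (auto dest: inj_onD)
qed (use assms(1) in blast)

lemma proper_edge_colouring_distinct_at:
  assumes "proper_edge_colouring E k c"
    and "{a, v} \<in> E" and "{b, v} \<in> E" and "{d, v} \<in> E" and "distinct [a, b, d]"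
  shows "distinct [c {a, v}, c {b, v}, c {d, v}]"
proof -
  have "c {x, v} \<noteq> c {y, v}" if "{x, v} \<in> E" "{y, v} \<in> E" "x \<noteq> y" for x y
    using assms(1) that unfolding proper_edge_colouring_def
    by (metis insert_iff doubleton_eq_iff disjoint_iff)
  then show ?thesis
    using assms(2-5) by auto
qed

lemma chromatic_index_eqI:
  assumes "proper_edge_colouring E k c"
    and "\<And>k' c'. proper_edge_colouring E k' c' \<Longrightarrow> k \<le> k'"
  shows "chromatic_index E = k"
  unfolding chromatic_index_def by (rule Least_equality) (use assms in blast)+

section \<open>Irreversible 2-threshold conversion\<close>

lemma conv_step_increasing: "X \<subseteq> conv_step V E X"
  by (auto simp: conv_step_def)

lemma conv_step_subset: "X \<subseteq> V \<Longrightarrow> conv_step V E X \<subseteq> V"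
  by (auto simp: conv_step_def)

lemma conv_stepI:
  assumes "finite X" and "v \<in> V" and "a \<in> X" and "b \<in> X" and "a \<noteq> b"
    and "a \<in> neighbours E v" and "b \<in> neighbours E v"
  shows "v \<in> conv_step V E X"
proof -
  have "card {a, b} \<le> card {u \<in> X. {u, v} \<in> E}"
    using assms by (intro card_mono) (auto simp: neighbours_def)
  then show ?thesis
    using assms(2,5) by (simp add: conv_step_def)
qed

definition induces_min_deg2 :: "'a set set \<Rightarrow> 'a set \<Rightarrow> bool" where
  "induces_min_deg2 E T \<longleftrightarrow> (\<forall>v\<in>T. \<exists>a\<in>T. \<exists>b\<in>T. a \<noteq> b \<and> {a, v} \<in> E \<and> {b, v} \<in> E)"

lemma induces_min_deg2_triangle:
  assumes "{a, b} \<in> E" and "{b, c} \<in> E" and "{c, a} \<in> E" and "distinct [a, b, c]"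
  shows "induces_min_deg2 E {a, b, c}"
  using assms by (auto simp: induces_min_deg2_def insert_commute)

lemma induces_min_deg2_quadrilateral:
  assumes "{a, b} \<in> E" and "{b, c} \<in> E" and "{c, d} \<in> E" and "{d, a} \<in> E"
    and "distinct [a, b, c, d]"
  shows "induces_min_deg2 E {a, b, c, d}"
  using assms by (auto simp: induces_min_deg2_def insert_commute)

lemma conv_step_iterate_avoids:
  assumes "cubic V E" and "T \<subseteq> V" and "induces_min_deg2 E T" and "S \<inter> T = {}"
  shows "(conv_step V E ^^ t) S \<inter> T = {}"
proof (induction t)
  case 0
  then show ?case using assms(4) by simp
next
  case (Suc t)
  let ?X = "(conv_step V E ^^ t) S"
  have "v \<notin> conv_step V E ?X" if "v \<in> T" for v
  proof -
    obtain a b where ab: "a \<in> T" "b \<in> T" "a \<noteq> b" "{a, v} \<in> E" "{b, v} \<in> E"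
      using assms(3) \<open>v \<in> T\<close> by (auto simp: induces_min_deg2_def)
    have "card (neighbours E v) = 3"
      using assms(1,2) \<open>v \<in> T\<close> by (auto simp: cubic_def degree_eq_card_neighbours)
    then have fin: "finite (neighbours E v)"
      by (metis card.infinite zero_neq_numeral)
    have "{u \<in> ?X. {u, v} \<in> E} \<subseteq> neighbours E v - {a, b}"
      using Suc.IH ab(1,2) by (auto simp: neighbours_def)
    then have "card {u \<in> ?X. {u, v} \<in> E} \<le> card (neighbours E v - {a, b})"
      using fin by (intro card_mono) auto
    also have "\<dots> = 1"
      using ab \<open>card (neighbours E v) = 3\<close> by (simp add: card_Diff_subset neighbours_def)
    finally have "card {u \<in> ?X. {u, v} \<in> E} \<le> 1" .
    moreover have "v \<notin> ?X"
      using Suc.IH \<open>v \<in> T\<close> by blast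
    ultimately show ?thesis
      unfolding conv_step_def by simp
  qed
  then show ?case
    by auto
qed

lemma conversion_set_meets_min_deg2:
  assumes "cubic V E" and "is_2conversion_set V E S"
    and "T \<subseteq> V" and "T \<noteq> {}" and "induces_min_deg2 E T"
  shows "S \<inter> T \<noteq> {}"
proof
  assume "S \<inter> T = {}"
  obtain t where "(conv_step V E ^^ t) S = V"
    using assms(2) by (auto simp: is_2conversion_set_def)
  then show False
    using conv_step_iterate_avoids[OF assms(1,3,5) \<open>S \<inter> T = {}\<close>, of t] assms(3,4) by auto
qed

section \<open>The graph G\<close>

definition copy_edges :: "nat \<Rightarrow> nat \<Rightarrow> (nat \<times> nat) list" where
  "copy_edges m i = (if i = 1 \<or> i = m then H1_edges else H2_edges)"

lemma fst_right_port [simp]: "fst (right_port i) = i"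
  by (simp add: right_port_def)

lemma edge_in_copy:
  assumes "1 \<le> i" and "i \<le> m"
    and "(a, b) \<in> set (copy_edges m i) \<or> (b, a) \<in> set (copy_edges m i)"
  shows "{(i, a), (i, b)} \<in> G_E m"
proof -
  have "{(i, a'), (i, b')} \<in> G_E m" if "(a', b') \<in> set (copy_edges m i)" for a' b'
    using assms(1,2) that unfolding G_E_def copy_edges_def by blast
  then show ?thesis
    using assms(3) by (metis insert_commute)
qed

lemma port_edge: "1 \<le> i \<Longrightarrow> i < m \<Longrightarrow> {right_port i, (i + 1, 1)} \<in> G_E m"
  unfolding G_E_def by blast

lemma leaf_copy_edge:
  assumes "2 \<le> m" and "i = 1 \<or> i = m" and "(a, b) \<in> set H1_edges \<or> (b, a) \<in> set H1_edges"
  shows "{(i, a), (i, b)} \<in> G_E m"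
  using assms by (intro edge_in_copy) (auto simp: copy_edges_def)

lemma inner_copy_edge:
  assumes "1 < i" and "i < m" and "(a, b) \<in> set H2_edges \<or> (b, a) \<in> set H2_edges"
  shows "{(i, a), (i, b)} \<in> G_E m"
  using assms by (intro edge_in_copy) (auto simp: copy_edges_def)

lemma G_E_cases:
  assumes "e \<in> G_E m"
  obtains i a b where "e = {(i, a), (i, b)}" "1 \<le> i" "i \<le> m" "(a, b) \<in> set (copy_edges m i)"
  | i where "e = {right_port i, (i + 1, 1)}" "1 \<le> i" "i < m"
  using assms unfolding G_E_def copy_edges_def by blast

lemma finite_G_V: "finite (G_V m)"
proof (rule finite_subset)
  show "G_V m \<subseteq> {1..m} \<times> {1..6}"
    by (auto simp: G_V_def split: if_splits)
qed simp

lemma card_G_V: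
  assumes "2 \<le> m"
  shows "card (G_V m) = 6 * m - 2"
proof -
  have "G_V m = {1..m} \<times> {1..6} - {(1, 6), (m, 6)}"
    by (auto simp: G_V_def split: if_splits)
  then show ?thesis
    using assms by (simp add: card_Diff_subset card_cartesian_product)
qed

lemma copy_edge_vertices:
  assumes "1 \<le> i" and "i \<le> m" and "(a, b) \<in> set (copy_edges m i)"
  shows "(i, a) \<in> G_V m" and "(i, b) \<in> G_V m"
  using assms by (auto simp: G_V_def copy_edges_def H1_edges_def H2_edges_def split: if_splits)

lemma port_edge_vertices:
  assumes "1 \<le> i" and "i < m"
  shows "right_port i \<in> G_V m" and "(i + 1, 1) \<in> G_V m"
  using assms by (auto simp: G_V_def right_port_def)

lemma G_E_endpoints:
  assumes "e \<in> G_E m"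
  shows "\<exists>u v. e = {u, v} \<and> u \<in> G_V m \<and> v \<in> G_V m"
  using assms
proof (cases rule: G_E_cases)
  case (1 i a b)
  then show ?thesis
    using copy_edge_vertices by blast
next
  case (2 i)
  then show ?thesis
    using port_edge_vertices by blast
qed

lemma G_E_adjacent_iff:
  "{u, (i, j)} \<in> G_E m \<longleftrightarrow>
     (fst u = i \<and> 1 \<le> i \<and> i \<le> m \<and>
        ((snd u, j) \<in> set (copy_edges m i) \<or> (j, snd u) \<in> set (copy_edges m i)))
   \<or> (j = 1 \<and> 2 \<le> i \<and> i \<le> m \<and> u = right_port (i - 1))
   \<or> (1 \<le> i \<and> i < m \<and> right_port i = (i, j) \<and> u = (i + 1, 1))"
  (is "?edge \<longleftrightarrow> ?local \<or> ?left \<or> ?right")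
proof
  assume ?edge
  then show "?local \<or> ?left \<or> ?right"
  proof (cases rule: G_E_cases)
    case (1 k a b)
    then show ?thesis
      by (cases u) (auto simp: doubleton_eq_iff)
  next
    case (2 k)
    moreover have "k = i" if "(i, j) = right_port k"
      using that by (metis fst_conv fst_right_port)
    ultimately show ?thesis
      by (auto simp: doubleton_eq_iff)
  qed
next
  assume "?local \<or> ?left \<or> ?right"
  then consider ?local | ?left | ?right
    by blast
  then show ?edge
  proof cases
    case 1
    then show ?edge
      using edge_in_copy[of i m "snd u" j] by (cases u) auto
  next
    case 2
    then show ?edge
      using port_edge[of "i - 1" m] by auto
  next
    case 3
    then show ?edge
      using port_edge[of i m] by (simp add: insert_commute)
  qed
qed

lemma neighbours_leaf_ports:
  assumes "2 \<le> m"
  shows "neighbours (G_E m) (1, 1) = {(1, 2), (1, 5), (2, 1)}"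
    and "neighbours (G_E m) (m, 1) = {(m, 2), (m, 5), right_port (m - 1)}"
  using assms
  by (auto simp: set_eq_iff neighbours_def G_E_adjacent_iff copy_edges_def H1_edges_def right_port_def)

lemma neighbours_leaf_copy:
  assumes "2 \<le> m" and "i = 1 \<or> i = m"
  shows "neighbours (G_E m) (i, 2) = {(i, 1), (i, 3), (i, 4)}"
    and "neighbours (G_E m) (i, 3) = {(i, 2), (i, 4), (i, 5)}"
    and "neighbours (G_E m) (i, 4) = {(i, 2), (i, 3), (i, 5)}"
    and "neighbours (G_E m) (i, 5) = {(i, 1), (i, 3), (i, 4)}"
  using assms
  by (auto simp: set_eq_iff neighbours_def G_E_adjacent_iff copy_edges_def H1_edges_def right_port_def)

lemma neighbours_inner_copy:
  assumes "1 < i" and "i < m"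
  shows "neighbours (G_E m) (i, 1) = {(i, 2), (i, 6), right_port (i - 1)}"
    and "neighbours (G_E m) (i, 2) = {(i, 1), (i, 3), (i, 5)}"
    and "neighbours (G_E m) (i, 3) = {(i, 2), (i, 4), (i, 6)}"
    and "neighbours (G_E m) (i, 4) = {(i, 3), (i, 5), (i + 1, 1)}"
    and "neighbours (G_E m) (i, 5) = {(i, 2), (i, 4), (i, 6)}"
    and "neighbours (G_E m) (i, 6) = {(i, 1), (i, 3), (i, 5)}"
  using assms
  by (auto simp: set_eq_iff neighbours_def G_E_adjacent_iff copy_edges_def H2_edges_def right_port_def)

lemma G_V_cases:
  assumes "v \<in> G_V m"
  obtains (first_port) "v = (1, 1)" | (last_port) "v = (m, 1)"
  | (leaf) i j where "v = (i, j)" "i = 1 \<or> i = m" "j \<in> {2, 3, 4, 5}"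
  | (inner) i j where "v = (i, j)" "1 < i" "i < m" "j \<in> {1, 2, 3, 4, 5, 6}"
  using assms by (cases v) (fastforce simp: G_V_def split: if_splits)

lemma cubic_G:
  assumes "2 \<le> m"
  shows "cubic (G_V m) (G_E m)"
  unfolding cubic_def
proof
  fix v assume "v \<in> G_V m"
  then show "degree (G_E m) v = 3"
    \<comment> \<open>without One_nat_def, simp keeps the literal 1 in (i, 1), so the neighbour tables match\<close>
    by (cases rule: G_V_cases; (elim insertE emptyE)?; use assms in
        \<open>simp del: One_nat_def add: degree_eq_card_neighbours neighbours_leaf_ports
          neighbours_leaf_copy neighbours_inner_copy right_port_def\<close>)
qed

lemma copy_path_edge:
  assumes "(i, Suc j) \<in> G_V m" and "1 \<le> j"
  shows "{(i, j), (i, Suc j)} \<in> G_E m"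
proof (rule edge_in_copy)
  show "1 \<le> i" "i \<le> m"
    using assms(1) by (auto simp: G_V_def)
  have "j \<in> {1, 2, 3, 4, 5}" "i = 1 \<or> i = m \<Longrightarrow> j \<in> {1, 2, 3, 4}"
    using assms by (auto simp: G_V_def split: if_splits)
  then have "(j, Suc j) \<in> set (copy_edges m i)"
    by (auto simp: copy_edges_def H1_edges_def H2_edges_def)
  then show "(j, Suc j) \<in> set (copy_edges m i) \<or> (Suc j, j) \<in> set (copy_edges m i)"
    by blast
qed

lemma reach_copy_start:
  assumes "(i, j) \<in> G_V m"
  shows "reach (G_E m) (i, j) (i, 1)"
  using assms
proof (induction j)
  case 0
  then show ?case by (simp add: G_V_def)
next
  case (Suc j)
  show ?case
  proof (cases "j = 0")
    case True
    then show ?thesis by (simp add: reach_def)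
  next
    case False
    then have "(i, j) \<in> G_V m"
      using Suc.prems by (auto simp: G_V_def)
    moreover have "{(i, Suc j), (i, j)} \<in> G_E m"
      using copy_path_edge[OF Suc.prems] False by (simp add: insert_commute)
    ultimately show ?thesis
      using Suc.IH reach_edge reach_trans by metis
  qed
qed

lemma reach_first_copy:
  assumes "1 \<le> i" and "i \<le> m"
  shows "reach (G_E m) (i, 1) (1, 1)"
  using assms
proof (induction i)
  case 0
  then show ?case by simp
next
  case (Suc k)
  show ?case
  proof (cases "k = 0")
    case True
    then show ?thesis by (simp add: reach_def)
  next
    case False
    then have "{(Suc k, 1), right_port k} \<in> G_E m"
      using port_edge[of k m] Suc.prems by (simp add: insert_commute)
    moreover have "reach (G_E m) (right_port k) (k, 1)"
    proof -
      obtain j where "right_port k = (k, j)"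
        by (metis fst_right_port prod.collapse)
      then show ?thesis
        using reach_copy_start[of k j m] port_edge_vertices(1)[of k m] False Suc.prems by simp
    qed
    moreover have "reach (G_E m) (k, 1) (1, 1)"
      using Suc False by simp
    ultimately show ?thesis
      using reach_edge reach_trans by metis
  qed
qed

lemma num_components_G:
  assumes "2 \<le> m"
  shows "num_components (G_V m) (G_E m) = 1"
proof (rule num_components_eq_1)
  show "(1, 1) \<in> G_V m"
    using assms by (simp add: G_V_def)
  fix v assume v: "v \<in> G_V m"
  then have "1 \<le> fst v" "fst v \<le> m"
    by (auto simp: G_V_def)
  then show "reach (G_E m) v (1, 1)"
    using reach_trans[OF reach_copy_start[of "fst v" "snd v" m] reach_first_copy[of "fst v" m]] v
    by simp
qed

lemma first_copy_closed:
  assumes "{x, y} \<in> G_E m - {{(1, 1), (2, 1)}}" and "fst x = 1"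
  shows "fst y = 1"
proof -
  have "{x, y} \<in> G_E m" and not_bridge: "{x, y} \<noteq> {(1, 1), (2, 1)}"
    using assms(1) by auto
  then show ?thesis
  proof (cases rule: G_E_cases)
    case (1 i a b)
    then have "x \<in> {(i, a), (i, b)}" "y \<in> {(i, a), (i, b)}"
      by blast+
    then show ?thesis
      using assms(2) by auto
  next
    case (2 k)
    have "k \<noteq> 1"
    proof
      assume "k = 1"
      then have "{x, y} = {(1, 1), (2, 1)}"
        using 2(1) by (simp add: right_port_def numeral_2_eq_2)
      then show False
        using not_bridge by blast
    qed
    moreover have "x \<in> {right_port k, (k + 1, 1)}"
      using 2(1) by blast
    ultimately show ?thesis
      using assms(2) 2(2) by auto
  qed
qed

lemma bridged_G:
  assumes "2 \<le> m"
  shows "bridged (G_V m) (G_E m)"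
  unfolding bridged_def
proof
  let ?e = "{(1, 1), (2, 1)} :: (nat \<times> nat) set"
  show "is_bridge (G_V m) (G_E m) ?e"
  proof (rule is_bridgeI)
    show "?e \<in> G_E m"
      using port_edge[of 1 m] assms by (simp add: right_port_def numeral_2_eq_2)
    show "num_components (G_V m) (G_E m) = 1"
      using assms by (rule num_components_G)
    show "finite (G_V m)"
      by (rule finite_G_V)
    show "(1, 1) \<in> G_V m" "(2, 1) \<in> G_V m"
      using assms by (auto simp: G_V_def)
    show "\<not> reach (G_E m - {?e}) (1, 1) (2, 1)"
    proof
      assume "reach (G_E m - {?e}) (1, 1) (2, 1)"
      then have "(2, 1) \<in> {v :: nat \<times> nat. fst v = 1}"
      proof (rule reach_closed)
        show "y \<in> {v. fst v = 1}" if "{x, y} \<in> G_E m - {?e}" and "x \<in> {v. fst v = 1}" for x y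
          using first_copy_closed that by blast
      qed simp
      then show False
        by simp
    qed
  qed
qed

lemma has_triangle_G:
  assumes "2 \<le> m"
  shows "has_triangle (G_E m)"
proof -
  have "(a, b) \<in> set H1_edges \<Longrightarrow> {(1, a), (1, b)} \<in> G_E m" for a b
    using leaf_copy_edge[OF assms, of 1 a b] by simp
  then have edges: "{(1, 2), (1, 3)} \<in> G_E m" "{(1, 3), (1, 4)} \<in> G_E m" "{(1, 2), (1, 4)} \<in> G_E m"
    by (simp_all add: H1_edges_def)
  show ?thesis
    unfolding has_triangle_def
    by (rule exI[of _ "(1::nat, 2::nat)"], rule exI[of _ "(1::nat, 3::nat)"],
        rule exI[of _ "(1::nat, 4::nat)"]) (use edges in simp)
qed

section \<open>Chromatic index\<close>

text \<open>The variables a, ..., g are the colours of v1v2, v2v3, v3v4, v4v5, v5v1, v2v4, v3v5 and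
  h that of the bridge at v1; the distinctness hypotheses are those at v1, ..., v5.\<close>

lemma H1_with_pendant_edge_not_3_edge_colourable:
  fixes a b c d e f g h :: nat
  assumes "a < 3" "b < 3" "c < 3" "d < 3" "e < 3" "f < 3" "g < 3" "h < 3"
    and "distinct [a, e, h]" "distinct [a, b, f]" "distinct [b, c, g]"
    and "distinct [c, d, f]" "distinct [d, e, g]"
  shows False
proof -
  have "{a, b, c, d, e, f, g, h} \<subseteq> {0, 1, 2}"
    using assms(1-8) by auto
  then show False
    using assms(9-) by auto
qed

lemma G_edge_colouring_needs_4:
  assumes "2 \<le> m" and col: "proper_edge_colouring (G_E m) k c"
  shows "4 \<le> k"
proof (rule ccontr)
  assume "\<not> 4 \<le> k"
  then have "c e < 3" if "e \<in> G_E m" for e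
    using col that by (fastforce simp: proper_edge_colouring_def)
  then have lt3: "c {(1, a), (1, b)} < 3" if "(a, b) \<in> set H1_edges" for a b
    using that leaf_copy_edge[OF assms(1), of 1 a b] by simp
  note at = proper_edge_colouring_distinct_at[OF col]
  note nbrs = neighbours_leaf_ports[OF assms(1)] neighbours_leaf_copy[OF assms(1)]
  have "distinct [c {(1, 2), (1, 1)}, c {(1, 5), (1, 1)}, c {(2, 1), (1, 1)}]"
    "distinct [c {(1, 1), (1, 2)}, c {(1, 3), (1, 2)}, c {(1, 4), (1, 2)}]"
    "distinct [c {(1, 2), (1, 3)}, c {(1, 4), (1, 3)}, c {(1, 5), (1, 3)}]"
    "distinct [c {(1, 3), (1, 4)}, c {(1, 5), (1, 4)}, c {(1, 2), (1, 4)}]"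
    "distinct [c {(1, 4), (1, 5)}, c {(1, 1), (1, 5)}, c {(1, 3), (1, 5)}]"
    by (rule at; simp del: One_nat_def add: edge_iff_mem_neighbours nbrs)+
  moreover have "c {(1, 1), (1, 2)} < 3" "c {(1, 2), (1, 3)} < 3" "c {(1, 3), (1, 4)} < 3"
    "c {(1, 4), (1, 5)} < 3" "c {(1, 5), (1, 1)} < 3" "c {(1, 2), (1, 4)} < 3" "c {(1, 3), (1, 5)} < 3"
    by (rule lt3, simp add: H1_edges_def)+
  moreover have "c {(2, 1), (1, 1)} < 3"
    using port_edge[of 1 m] assms(1) \<open>\<And>e. e \<in> G_E m \<Longrightarrow> c e < 3\<close>
    by (simp add: right_port_def insert_commute numeral_2_eq_2)
  ultimately show False
    using H1_with_pendant_edge_not_3_edge_colourable[of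
        "c {(1, 1), (1, 2)}" "c {(1, 2), (1, 3)}" "c {(1, 3), (1, 4)}" "c {(1, 4), (1, 5)}"
        "c {(1, 5), (1, 1)}" "c {(1, 2), (1, 4)}" "c {(1, 3), (1, 5)}" "c {(2, 1), (1, 1)}"]
    by (simp add: insert_commute)
qed

definition H1_colour :: "nat set \<Rightarrow> nat" where
  "H1_colour e = (if e \<in> {{1, 2}, {4, 5}} then 0 else if e \<in> {{2, 3}, {1, 5}} then 1
     else if e \<in> {{2, 4}, {3, 5}} then 2 else 3)"

definition H2_colour :: "nat set \<Rightarrow> nat" where
  "H2_colour e = (if e \<in> {{1, 2}, {3, 6}, {4, 5}} then 0
     else if e \<in> {{1, 6}, {2, 5}, {3, 4}} then 1 else 2)"

text \<open>Edges between copies get colour 3; inside H1 only v3v4 also gets colour 3, and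
  neither of its ends is a port.\<close>

definition G_colour :: "nat \<Rightarrow> (nat \<times> nat) set \<Rightarrow> nat" where
  "G_colour m e = (if card (fst ` e) = 1
     then (if fst ` e \<subseteq> {1, m} then H1_colour (snd ` e) else H2_colour (snd ` e)) else 3)"

lemma local_colours_le: "H1_colour s \<le> 3" "H2_colour s \<le> 2"
  by (simp_all add: H1_colour_def H2_colour_def)

lemma G_colour_inj_on_neighbours:
  assumes "2 \<le> m" and "v \<in> G_V m"
  shows "inj_on (\<lambda>u. G_colour m {u, v}) (neighbours (G_E m) v)"
  using assms(2)
proof (cases rule: G_V_cases)
  case first_port
  with assms(1) show ?thesis
    by (simp only: neighbours_leaf_ports)
      (rule inj_on_three, simp add: G_colour_def H1_colour_def doubleton_eq_iff)
next
  case last_port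
  with assms(1) show ?thesis
    by (simp only: neighbours_leaf_ports)
      (rule inj_on_three, simp add: G_colour_def H1_colour_def doubleton_eq_iff)
next
  case (leaf i j)
  from leaf(3) show ?thesis
    unfolding leaf(1)
    apply (elim insertE emptyE)
       apply (simp_all only: neighbours_leaf_copy[OF assms(1) leaf(2)])
       apply (rule inj_on_three)+
    using leaf(2) apply (simp_all add: G_colour_def H1_colour_def doubleton_eq_iff)
    done
next
  case (inner i j)
  from inner(4) show ?thesis
    unfolding inner(1)
    apply (elim insertE emptyE)
         apply (simp_all only: neighbours_inner_copy[OF inner(2,3)])
         apply (rule inj_on_three)+
    using inner(2,3) apply (simp_all add: G_colour_def H2_colour_def doubleton_eq_iff)
    done
qed

lemma G_colour_proper:
  assumes "2 \<le> m"
  shows "proper_edge_colouring (G_E m) 4 (G_colour m)"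
proof (rule proper_edge_colouringI)
  show "G_colour m e < 4" for e
    using local_colours_le[of "snd ` e"] by (simp add: G_colour_def)
  show "\<exists>u v. e = {u, v} \<and> u \<in> G_V m \<and> v \<in> G_V m" if "e \<in> G_E m" for e
    using that by (rule G_E_endpoints)
  show "inj_on (\<lambda>u. G_colour m {u, v}) (neighbours (G_E m) v)" if "v \<in> G_V m" for v
    using assms that by (rule G_colour_inj_on_neighbours)
qed

lemma class2_G:
  assumes "2 \<le> m"
  shows "class2 (G_V m) (G_E m)"
proof -
  have "chromatic_index (G_E m) = 4"
    using G_colour_proper[OF assms] G_edge_colouring_needs_4[OF assms] by (rule chromatic_index_eqI)
  moreover have "max_degree (G_V m) (G_E m) = 3"
  proof (rule max_degree_cubic)
    show "cubic (G_V m) (G_E m)"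
      using assms by (rule cubic_G)
    have "(1, 1) \<in> G_V m"
      using assms by (simp add: G_V_def)
    then show "G_V m \<noteq> {}"
      by blast
  qed
  ultimately show ?thesis
    by (simp add: class2_def)
qed

section \<open>The 2-conversion number\<close>

definition seed :: "nat \<Rightarrow> (nat \<times> nat) set" where
  "seed m = (\<Union>i\<in>{1..m}. {(i, 2), (i, if i = 1 \<or> i = m then 5 else 6)})"

lemma seed_subset: "seed m \<subseteq> G_V m"
  by (auto simp: seed_def G_V_def)

lemma seed_mem:
  assumes "1 \<le> i" and "i \<le> m"
  shows "(i, 2) \<in> seed m" and "(i, if i = 1 \<or> i = m then 5 else 6) \<in> seed m"
  using assms unfolding seed_def by (intro UN_I[of i]; simp)+

lemma card_seed: "card (seed m) = 2 * m"
proof -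
  have "card (seed m) = (\<Sum>i\<in>{1..m}. card {(i, 2::nat), (i, if i = 1 \<or> i = m then 5 else 6)})"
    unfolding seed_def by (rule card_UN_disjoint) auto
  also have "\<dots> = 2 * m"
    by simp
  finally show ?thesis .
qed

lemma seed_two_neighbours:
  assumes "2 \<le> m" and "v \<in> G_V m" and "v \<notin> seed m"
    and "\<And>i. 1 < i \<Longrightarrow> i < m \<Longrightarrow> v \<noteq> (i, 4)"
  obtains a b where "a \<in> seed m" "b \<in> seed m" "a \<noteq> b"
    "a \<in> neighbours (G_E m) v" "b \<in> neighbours (G_E m) v"
  using assms(2)
proof (cases rule: G_V_cases)
  case first_port
  then show thesis
    using that[of "(1, 2)" "(1, 5)"] seed_mem[of 1 m] neighbours_leaf_ports(1)[OF assms(1)] assms(1)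
    by simp
next
  case last_port
  then show thesis
    using that[of "(m, 2)" "(m, 5)"] seed_mem[of m m] neighbours_leaf_ports(2)[OF assms(1)] assms(1)
    by simp
next
  case (leaf i j)
  have seed: "(i, 2) \<in> seed m" "(i, 5) \<in> seed m"
    using seed_mem[of i m] leaf(2) assms(1) by auto
  then have "j \<noteq> 2" "j \<noteq> 5"
    using assms(3) leaf(1) by blast+
  with leaf(3) have "j = 3 \<or> j = 4"
    by simp
  then have "(i, 2) \<in> neighbours (G_E m) v \<and> (i, 5) \<in> neighbours (G_E m) v"
    by (elim disjE) (simp_all add: leaf(1) neighbours_leaf_copy[OF assms(1) leaf(2)])
  then show thesis
    using that[OF seed] by simp
next
  case (inner i j)
  have seed: "(i, 2) \<in> seed m" "(i, 6) \<in> seed m"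
    using seed_mem[of i m] inner(2,3) by auto
  then have "j \<noteq> 2" "j \<noteq> 6" "j \<noteq> 4"
    using assms(3,4) inner(1-3) by blast+
  with inner(4) have "j = 1 \<or> j = 3 \<or> j = 5"
    by simp
  then have "(i, 2) \<in> neighbours (G_E m) v \<and> (i, 6) \<in> neighbours (G_E m) v"
    by (elim disjE) (simp_all del: One_nat_def add: inner(1) neighbours_inner_copy[OF inner(2,3)])
  then show thesis
    using that[OF seed] by simp
qed

lemma seed_first_step:
  assumes "2 \<le> m" and "v \<in> G_V m" and "\<And>i. 1 < i \<Longrightarrow> i < m \<Longrightarrow> v \<noteq> (i, 4)"
  shows "v \<in> conv_step (G_V m) (G_E m) (seed m)"
proof (cases "v \<in> seed m")
  case True
  then show ?thesis
    by (rule subsetD[OF conv_step_increasing])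
next
  case False
  obtain a b where ab: "a \<in> seed m" "b \<in> seed m" "a \<noteq> b"
    "a \<in> neighbours (G_E m) v" "b \<in> neighbours (G_E m) v"
    using seed_two_neighbours[OF assms(1,2) False assms(3)] by blast
  have "finite (seed m)"
    using finite_subset[OF seed_subset finite_G_V] .
  from conv_stepI[OF this assms(2) ab] show ?thesis .
qed

lemma leaf_copy_min_deg2_avoiding:
  assumes "2 \<le> m" and "i = 1 \<or> i = m"
  obtains T where "T \<subseteq> {(i, 1), (i, 2), (i, 3), (i, 4), (i, 5)}" "T \<noteq> {}" "(i, x) \<notin> T"
    "induces_min_deg2 (G_E m) T"
proof -
  note e = leaf_copy_edge[OF assms]
  consider "x = 2" | "x = 3" | "x = 4" | "x \<notin> {2, 3, 4}"
    by blast
  then show thesis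
  proof cases
    case 1
    have T: "induces_min_deg2 (G_E m) {(i, 3), (i, 4), (i, 5)}"
      by (rule induces_min_deg2_triangle) (simp_all add: e H1_edges_def)
    show thesis
      by (rule that[OF _ _ _ T]) (use 1 in auto)
  next
    case 2
    have T: "induces_min_deg2 (G_E m) {(i, 1), (i, 2), (i, 4), (i, 5)}"
      by (rule induces_min_deg2_quadrilateral) (simp_all add: e H1_edges_def)
    show thesis
      by (rule that[OF _ _ _ T]) (use 2 in auto)
  next
    case 3
    have T: "induces_min_deg2 (G_E m) {(i, 1), (i, 2), (i, 3), (i, 5)}"
      by (rule induces_min_deg2_quadrilateral) (simp_all add: e H1_edges_def)
    show thesis
      by (rule that[OF _ _ _ T]) (use 3 in auto)
  next
    case 4
    have T: "induces_min_deg2 (G_E m) {(i, 2), (i, 3), (i, 4)}"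
      by (rule induces_min_deg2_triangle) (simp_all add: e H1_edges_def)
    show thesis
      by (rule that[OF _ _ _ T]) (use 4 in auto)
  qed
qed

lemma inner_copy_min_deg2_avoiding:
  assumes "1 < i" and "i < m"
  obtains T where "T \<subseteq> {(i, 1), (i, 2), (i, 3), (i, 4), (i, 5), (i, 6)}" "T \<noteq> {}" "(i, x) \<notin> T"
    "induces_min_deg2 (G_E m) T"
proof -
  note e = inner_copy_edge[OF assms]
  consider "x = 2" | "x = 3" | "x = 5" | "x = 6" | "x \<notin> {2, 3, 5, 6}"
    by blast
  then show thesis
  proof cases
    case 1
    have T: "induces_min_deg2 (G_E m) {(i, 3), (i, 4), (i, 5), (i, 6)}"
      by (rule induces_min_deg2_quadrilateral) (simp_all add: e H2_edges_def)
    show thesis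
      by (rule that[OF _ _ _ T]) (use 1 in auto)
  next
    case 2
    have T: "induces_min_deg2 (G_E m) {(i, 1), (i, 2), (i, 5), (i, 6)}"
      by (rule induces_min_deg2_quadrilateral) (simp_all add: e H2_edges_def)
    show thesis
      by (rule that[OF _ _ _ T]) (use 2 in auto)
  next
    case 3
    have T: "induces_min_deg2 (G_E m) {(i, 1), (i, 2), (i, 3), (i, 6)}"
      by (rule induces_min_deg2_quadrilateral) (simp_all add: e H2_edges_def)
    show thesis
      by (rule that[OF _ _ _ T]) (use 3 in auto)
  next
    case 4
    have T: "induces_min_deg2 (G_E m) {(i, 2), (i, 3), (i, 4), (i, 5)}"
      by (rule induces_min_deg2_quadrilateral) (simp_all add: e H2_edges_def)
    show thesis
      by (rule that[OF _ _ _ T]) (use 4 in auto)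
  next
    case 5
    have T: "induces_min_deg2 (G_E m) {(i, 2), (i, 3), (i, 6), (i, 5)}"
      by (rule induces_min_deg2_quadrilateral) (simp_all add: e H2_edges_def)
    show thesis
      by (rule that[OF _ _ _ T]) (use 5 in auto)
  qed
qed

lemma copy_min_deg2_avoiding:
  assumes "2 \<le> m" and "1 \<le> i" and "i \<le> m"
  obtains T where "T \<subseteq> G_V m" "T \<noteq> {}" "(i, x) \<notin> T" "\<forall>v\<in>T. fst v = i"
    "induces_min_deg2 (G_E m) T"
proof -
  let ?C = "{(i, j) | j. 1 \<le> j \<and> j \<le> 6} \<inter> G_V m"
  obtain T where T: "T \<subseteq> ?C" "T \<noteq> {}" "(i, x) \<notin> T" "induces_min_deg2 (G_E m) T"
  proof (cases "i = 1 \<or> i = m")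
    case True
    obtain T where T: "T \<subseteq> {(i, 1), (i, 2), (i, 3), (i, 4), (i, 5)}" "T \<noteq> {}" "(i, x) \<notin> T"
      "induces_min_deg2 (G_E m) T"
      using leaf_copy_min_deg2_avoiding[OF assms(1) True] .
    have "{(i, 1), (i, 2), (i, 3), (i, 4), (i, 5)} \<subseteq> ?C"
      using True assms by (auto simp: G_V_def)
    from subset_trans[OF T(1) this] T(2-4) show thesis
      by (rule that)
  next
    case False
    then have inner: "1 < i" "i < m"
      using assms(2,3) by auto
    obtain T where T: "T \<subseteq> {(i, 1), (i, 2), (i, 3), (i, 4), (i, 5), (i, 6)}" "T \<noteq> {}"
      "(i, x) \<notin> T" "induces_min_deg2 (G_E m) T"
      using inner_copy_min_deg2_avoiding[OF inner] .
    have "{(i, 1), (i, 2), (i, 3), (i, 4), (i, 5), (i, 6)} \<subseteq> ?C"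
      using inner by (auto simp: G_V_def)
    from subset_trans[OF T(1) this] T(2-4) show thesis
      by (rule that)
  qed
  show thesis
  proof (rule that[OF _ T(2,3) _ T(4)])
    show "T \<subseteq> G_V m" "\<forall>v\<in>T. fst v = i"
      using T(1) by auto
  qed
qed

lemma seed_converts:
  assumes "2 \<le> m"
  shows "(conv_step (G_V m) (G_E m) ^^ 2) (seed m) = G_V m"
proof -
  let ?f = "conv_step (G_V m) (G_E m)"
  have "?f (?f (seed m)) \<subseteq> G_V m"
    by (intro conv_step_subset seed_subset)
  moreover have "v \<in> ?f (?f (seed m))" if v: "v \<in> G_V m" for v
  proof (cases "\<exists>i. 1 < i \<and> i < m \<and> v = (i, 4)")
    case True
    then obtain i where i: "1 < i" "i < m" and v4: "v = (i, 4)"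
      by blast
    have "(i, 3) \<in> G_V m" "(i, 5) \<in> G_V m"
      using i by (auto simp: G_V_def)
    then have "(i, 3) \<in> ?f (seed m)" "(i, 5) \<in> ?f (seed m)"
      using assms by (auto intro: seed_first_step)
    moreover have "(i, 3) \<in> neighbours (G_E m) v" "(i, 5) \<in> neighbours (G_E m) v"
      using neighbours_inner_copy(4)[OF i] v4 by auto
    moreover have "finite (?f (seed m))"
      using finite_subset[OF conv_step_subset[OF seed_subset] finite_G_V] .
    ultimately show ?thesis
      using conv_stepI[OF _ v, of "?f (seed m)" "(i, 3)" "(i, 5)"] by simp
  next
    case False
    then have "v \<in> ?f (seed m)"
      using seed_first_step[OF assms v] by blast
    then show ?thesis
      by (rule subsetD[OF conv_step_increasing])
  qed
  ultimately show ?thesis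
    by (auto simp: numeral_2_eq_2)
qed

lemma is_2conversion_set_seed:
  "2 \<le> m \<Longrightarrow> is_2conversion_set (G_V m) (G_E m) (seed m)"
  unfolding is_2conversion_set_def using seed_subset seed_converts by blast

lemma conversion_set_meets_copy_twice:
  assumes "2 \<le> m" and S: "is_2conversion_set (G_V m) (G_E m) S" and "1 \<le> i" and "i \<le> m"
  shows "2 \<le> card {v \<in> S. fst v = i}"
proof (rule ccontr)
  let ?B = "{v \<in> S. fst v = i}"
  assume "\<not> 2 \<le> card ?B"
  moreover have "finite ?B"
    using S finite_subset[OF _ finite_G_V] by (auto simp: is_2conversion_set_def)
  ultimately have "\<forall>a\<in>?B. \<forall>b\<in>?B. a = b"
    using card_le_Suc0_iff_eq by fastforce
  then obtain x where x: "?B \<subseteq> {(i, x)}"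
    by (metis (mono_tags, lifting) empty_subsetI insert_subset mem_Collect_eq prod.collapse subsetI)
  obtain T where T: "T \<subseteq> G_V m" "T \<noteq> {}" "(i, x) \<notin> T" "\<forall>v\<in>T. fst v = i"
    "induces_min_deg2 (G_E m) T"
    using copy_min_deg2_avoiding[OF assms(1,3,4)] by blast
  have "S \<inter> T \<noteq> {}"
    using conversion_set_meets_min_deg2[OF cubic_G[OF assms(1)] S T(1,2,5)] .
  then show False
    using x T(3,4) by blast
qed

lemma card_conversion_set_ge:
  assumes "2 \<le> m" and S: "is_2conversion_set (G_V m) (G_E m) S"
  shows "2 * m \<le> card S"
proof -
  have fin: "finite S"
    using S finite_subset[OF _ finite_G_V] by (auto simp: is_2conversion_set_def)
  have "2 * m = (\<Sum>i\<in>{1..m}. 2)"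
    by simp
  also have "\<dots> \<le> (\<Sum>i\<in>{1..m}. card {v \<in> S. fst v = i})"
    using conversion_set_meets_copy_twice[OF assms] by (intro sum_mono) auto
  also have "\<dots> = card (\<Union>i\<in>{1..m}. {v \<in> S. fst v = i})"
    using fin by (intro card_UN_disjoint[symmetric]) auto
  also have "\<dots> \<le> card S"
    using fin by (intro card_mono) auto
  finally show ?thesis .
qed

lemma c2_G:
  assumes "2 \<le> m"
  shows "c2 (G_V m) (G_E m) = 2 * m"
  unfolding c2_def
proof (rule Least_equality)
  show "\<exists>S. is_2conversion_set (G_V m) (G_E m) S \<and> card S = 2 * m"
    using is_2conversion_set_seed[OF assms] card_seed by blast
  show "2 * m \<le> k" if "\<exists>S. is_2conversion_set (G_V m) (G_E m) S \<and> card S = k" for k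
    using that card_conversion_set_ge[OF assms] by blast
qed

lemma int_minus_ceiling_half: "int m - \<lceil>real m / 2\<rceil> = \<lfloor>real m / 2\<rfloor>"
proof -
  have "real m / 2 = - (real m / 2) + of_int (int m)"
    by simp
  then have "\<lfloor>real m / 2\<rfloor> = \<lfloor>- (real m / 2)\<rfloor> + int m"
    by (metis floor_add_int)
  then show ?thesis
    by (simp add: floor_minus)
qed

lemma c2_G_excess:
  assumes "2 \<le> m"
  shows "int (c2 (G_V m) (G_E m)) - \<lceil>(real (card (G_V m)) + 2) / 4\<rceil> = \<lfloor>real m / 2\<rfloor>"
proof -
  have "(real (card (G_V m)) + 2) / 4 = real m / 2 + of_int (int m)"
    using assms by (simp add: card_G_V of_nat_diff field_simps)
  then have "\<lceil>(real (card (G_V m)) + 2) / 4\<rceil> = \<lceil>real m / 2\<rceil> + int m"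
    by (simp only: ceiling_add_of_int)
  then show ?thesis
    using int_minus_ceiling_half[of m] by (simp add: c2_G[OF assms])
qed

theorem proposition5p6:
  fixes m :: nat
  assumes "m \<ge> 2"
  shows "cubic (G_V m) (G_E m) \<and> bridged (G_V m) (G_E m) \<and> class2 (G_V m) (G_E m)
         \<and> has_triangle (G_E m)
         \<and> int (c2 (G_V m) (G_E m)) - \<lceil>(real (card (G_V m)) + 2) / 4\<rceil> = \<lfloor>real m / 2\<rfloor>"
  using cubic_G[OF assms] bridged_G[OF assms] class2_G[OF assms] has_triangle_G[OF assms]
    c2_G_excess[OF assms]
  by blast

end
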